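(* Let $S_N$ be the star graph on $N\ge 2$ vertices with center $c$ and leaves $\ell_1,\dots,\ell_{N-1}$, and let $\delta\in[0,1]$. Then for each $i\in\{1,\dots,N-1\}$, $$\mathsf{fp}_{r=1}^{\delta}(S_N,\{\ell_i\})=\frac{1+(1-\delta)(N-2)}{(1-\delta)(N-2)^2+2(N-1)}\quad\text{and}\quad\mathsf{fp}_{r=1}^{\delta}(S_N,\{c\})=\frac{1+\delta(N-2)}{(1-\delta)(N-2)^2+2(N-1)}.$$
   Context: Mixed $\delta$-updating on an undirected unweighted graph $G=(V,E)$: each vertex holds a mutant (fitness $r$) or wild-type (fitness $1$); $f_S(u)$ is the fitness at $u$ when $S$ is the mutant set. At each step, with probability $\delta$ a death-Birth step: choose $v$ uniformly to die, choose a neighbor $u$ of $v$ with probability proportional to $f_S(u)$, $u$ copies its type onto $v$; with probability $1-\delta$ a Birth-death step: choose $u$ with probability proportional to $f_S(u)$ among all vertices, choose a uniformly random neighbor $v$ of $u$, $u$ copies its type onto $v$. $\mathsf{fp}_r^\delta(G,S_0)$ is the probability that all vertices eventually become mutant from initial mutant set $S_0$. *)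

theory Defs
  imports Complex_Main
begin

text \<open>Undirected unweighted graphs are given by a finite vertex set V and a symmetric,
irreflexive adjacency relation E.  A state of the process is the set S of mutant vertices.\<close>

definition fit :: "real \<Rightarrow> 'a set \<Rightarrow> 'a \<Rightarrow> real" where
  "fit r S u = (if u \<in> S then r else 1)"

definition nbrs :: "'a set \<Rightarrow> ('a \<Rightarrow> 'a \<Rightarrow> bool) \<Rightarrow> 'a \<Rightarrow> 'a set" where
  "nbrs V E v = {u \<in> V. E v u}"

definition copy_to :: "'a set \<Rightarrow> 'a \<Rightarrow> 'a \<Rightarrow> 'a set" where
  "copy_to S u v = (if u \<in> S then insert v S else S - {v})"

text \<open>absorb V E r d n S = probability that after n steps of mixed d-updating, started
from mutant set S, all vertices are mutants (one-step analysis / backward equation).\<close>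
fun absorb :: "'a set \<Rightarrow> ('a \<Rightarrow> 'a \<Rightarrow> bool) \<Rightarrow> real \<Rightarrow> real \<Rightarrow> nat \<Rightarrow> 'a set \<Rightarrow> real" where
  "absorb V E r d 0 S = (if S = V then 1 else 0)"
| "absorb V E r d (Suc n) S =
     d * (\<Sum>v\<in>V. (1 / real (card V)) *
            (\<Sum>u\<in>nbrs V E v. (fit r S u / (\<Sum>w\<in>nbrs V E v. fit r S w)) *
                 absorb V E r d n (copy_to S u v)))
   + (1 - d) * (\<Sum>u\<in>V. (fit r S u / (\<Sum>w\<in>V. fit r S w)) *
            (\<Sum>v\<in>nbrs V E u. (1 / real (card (nbrs V E u))) *
                 absorb V E r d n (copy_to S u v)))"

text \<open>Fixation probability: probability of eventually reaching the all-mutant state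
(which is absorbing), i.e. the limit of the n-step absorption probabilities.\<close>
definition fp :: "'a set \<Rightarrow> ('a \<Rightarrow> 'a \<Rightarrow> bool) \<Rightarrow> real \<Rightarrow> real \<Rightarrow> 'a set \<Rightarrow> real" where
  "fp V E r d S0 = lim (\<lambda>n. absorb V E r d n S0)"

definition star_V :: "nat \<Rightarrow> nat set" where
  "star_V N = {0..<N}"

definition star_E :: "nat \<Rightarrow> nat \<Rightarrow> bool" where
  "star_E u v = (u \<noteq> v \<and> (u = 0 \<or> v = 0))"

end

theory Submission
  imports Defs
begin

text \<open>For neutral mutants on the star, one step of mixed updating copies a given leaf onto
the centre with probability proportional to w_leaf and the centre onto a given leaf with
probability proportional to w_center, where w_center = 1 + d(N-2) and w_leaf = 1 + (1-d)(N-2).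
Hence the weighted mutant count, with weight w_center on the centre and w_leaf on each leaf,
is a martingale.  The fixation probability is harmonic with boundary values 1 at the full set
and 0 at the empty set, and so is the weighted count divided by its total; their difference
vanishes by a maximum principle, because from every state repeated copying of the centre onto
the leaves reaches one of the two absorbing states.\<close>

lemma sum_ge_card_bound_imp_eq:
  fixes f :: "'a \<Rightarrow> real"
  assumes "finite A" and le: "\<And>y. y \<in> A \<Longrightarrow> f y \<le> c"
    and ge: "real (card A) * c \<le> sum f A" and "x \<in> A"
  shows "f x = c"
proof -
  have "(\<Sum>y\<in>A. c - f y) \<le> 0" using ge by (simp add: sum_subtractf)
  moreover have nonneg: "\<forall>y\<in>A. 0 \<le> c - f y" using le by simp
  ultimately have "(\<Sum>y\<in>A. c - f y) = 0" by (meson order_antisym sum_nonneg)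
  then have "\<forall>y\<in>A. c - f y = 0"
    using sum_nonneg_eq_0_iff[OF \<open>finite A\<close>, of "\<lambda>y. c - f y"] nonneg by simp
  then show ?thesis using \<open>x \<in> A\<close> by simp
qed

locale star_process =
  fixes N :: nat and d :: real
  assumes two_le_N: "2 \<le> N" and d_nonneg: "0 \<le> d" and d_le_1: "d \<le> 1"
begin

abbreviation absorb_star :: "nat \<Rightarrow> nat set \<Rightarrow> real" where
  "absorb_star n \<equiv> absorb (star_V N) star_E 1 d n"

abbreviation fp_star :: "nat set \<Rightarrow> real" where
  "fp_star \<equiv> fp (star_V N) star_E 1 d"

definition leaves :: "nat set" where
  "leaves = {1..<N}"

definition w_center :: real where
  "w_center = 1 + d * (real N - 2)"

definition w_leaf :: real where
  "w_leaf = 1 + (1 - d) * (real N - 2)"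

text \<open>A leaf is copied onto the centre with probability d/(N(N-1)) by death-Birth plus
(1-d)/N by Birth-death; the centre onto a leaf with probability d/N plus (1-d)/(N(N-1)).\<close>

definition p_leaf_to_center :: real where
  "p_leaf_to_center = w_leaf / (real N * (real N - 1))"

definition p_center_to_leaf :: real where
  "p_center_to_leaf = w_center / (real N * (real N - 1))"

definition step :: "(nat set \<Rightarrow> real) \<Rightarrow> nat set \<Rightarrow> real" where
  "step g S = (\<Sum>u\<in>leaves. p_leaf_to_center * g (copy_to S u 0)
                          + p_center_to_leaf * g (copy_to S 0 u))"

definition harmonic :: "(nat set \<Rightarrow> real) \<Rightarrow> bool" where
  "harmonic g \<longleftrightarrow> (\<forall>S \<subseteq> star_V N. step g S = g S)"

definition vertex_weight :: "nat \<Rightarrow> real" where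
  "vertex_weight x = (if x = 0 then w_center else w_leaf)"

definition mutant_weight :: "nat set \<Rightarrow> real" where
  "mutant_weight S = (\<Sum>x\<in>S. vertex_weight x)"

lemma star_V_eq: "star_V N = insert 0 leaves"
  and zero_notin_leaves: "0 \<notin> leaves"
  and finite_leaves: "finite leaves"
  using two_le_N by (auto simp: star_V_def leaves_def)

lemma leaves_subset_star_V: "leaves \<subseteq> star_V N"
  and zero_in_star_V: "0 \<in> star_V N"
  using star_V_eq by auto

lemma card_leaves: "real (card leaves) = real N - 1"
  using two_le_N by (simp add: leaves_def of_nat_diff)

lemma nbrs_center: "nbrs (star_V N) star_E 0 = leaves"
  using two_le_N by (auto simp: nbrs_def star_V_def star_E_def leaves_def)

lemma nbrs_leaf: "v \<in> leaves \<Longrightarrow> nbrs (star_V N) star_E v = {0}"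
  using two_le_N by (auto simp: nbrs_def star_V_def star_E_def leaves_def)

lemma copy_to_subset:
  "S \<subseteq> star_V N \<Longrightarrow> v \<in> star_V N \<Longrightarrow> copy_to S u v \<subseteq> star_V N"
  by (auto simp: copy_to_def)

lemma w_center_ge_1: "1 \<le> w_center" and w_leaf_ge_1: "1 \<le> w_leaf"
  using two_le_N d_nonneg d_le_1 by (simp_all add: w_center_def w_leaf_def)

lemma p_leaf_to_center_pos: "0 < p_leaf_to_center"
  and p_center_to_leaf_pos: "0 < p_center_to_leaf"
  using two_le_N w_center_ge_1 w_leaf_ge_1
  by (simp_all add: p_leaf_to_center_def p_center_to_leaf_def)

lemma card_leaves_mult_p_sum: "real (card leaves) * (p_leaf_to_center + p_center_to_leaf) = 1"
proof -
  have "w_leaf + w_center = real N" by (simp add: w_center_def w_leaf_def algebra_simps)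
  then have "p_leaf_to_center + p_center_to_leaf = 1 / (real N - 1)"
    using two_le_N
    by (simp add: p_leaf_to_center_def p_center_to_leaf_def add_divide_distrib[symmetric])
  then show ?thesis using two_le_N by (simp add: card_leaves)
qed

lemma detailed_balance: "p_leaf_to_center * w_center = p_center_to_leaf * w_leaf"
  by (simp add: p_leaf_to_center_def p_center_to_leaf_def)

lemma absorb_Suc_eq_step: "absorb_star (Suc n) S = step (absorb_star n) S"
proof -
  let ?g = "absorb_star n"
  define A where "A = (\<Sum>u\<in>leaves. ?g (copy_to S u 0))"
  define B where "B = (\<Sum>u\<in>leaves. ?g (copy_to S 0 u))"
  have fit_1: "fit 1 S u = 1" for u by (simp add: fit_def)
  have card_star_V: "card (star_V N) = N" by (simp add: star_V_def)
  have sum_star_V: "(\<Sum>v\<in>star_V N. h v) = h 0 + (\<Sum>v\<in>leaves. h v)"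
    for h :: "nat \<Rightarrow> real"
    using star_V_eq zero_notin_leaves finite_leaves by simp
  have "absorb_star (Suc n) S =
     d * (A / (real N * (real N - 1)) + B / real N)
     + (1 - d) * (B / (real N * (real N - 1)) + A / real N)"
    using finite_leaves
    by (simp add: fit_1 card_star_V sum_star_V nbrs_center nbrs_leaf card_leaves
        A_def B_def sum_divide_distrib[symmetric] sum_distrib_left[symmetric] cong: sum.cong)
  also have "\<dots> = p_leaf_to_center * A + p_center_to_leaf * B"
  proof -
    define L where "L = real N - 1"
    have N_eq: "real N = L + 1" by (simp add: L_def)
    have "0 < L" using two_le_N by (simp add: L_def)
    moreover have w_eqs: "w_center = 1 - d + d * L" "w_leaf = d + (1 - d) * L"
      by (simp_all add: w_center_def w_leaf_def L_def algebra_simps)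
    ultimately show ?thesis
      unfolding p_leaf_to_center_def p_center_to_leaf_def L_def[symmetric] N_eq w_eqs
      by (simp add: divide_simps) (simp add: algebra_simps)
  qed
  also have "\<dots> = step ?g S"
    by (simp add: step_def A_def B_def sum.distrib sum_distrib_left)
  finally show ?thesis .
qed

declare absorb.simps(2)[simp del]

lemma step_minus_self:
  "step g S - g S = (\<Sum>u\<in>leaves. p_leaf_to_center * (g (copy_to S u 0) - g S)
                                + p_center_to_leaf * (g (copy_to S 0 u) - g S))"
proof -
  have "g S = (\<Sum>u\<in>leaves. (p_leaf_to_center + p_center_to_leaf) * g S)"
    using card_leaves_mult_p_sum by simp
  then show ?thesis by (simp add: step_def algebra_simps sum_subtractf)
qed

lemma step_const: "step (\<lambda>_. c) S = c"
  using step_minus_self[of "\<lambda>_. c"] by simp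

lemma step_fixed:
  assumes "\<And>u. u \<in> leaves \<Longrightarrow> copy_to S u 0 = S \<and> copy_to S 0 u = S"
  shows "step g S = g S"
  using step_minus_self[of g S] assms by simp

lemma step_lincomb: "step (\<lambda>T. a * g T + b * h T) S = a * step g S + b * step h S"
  by (simp add: step_def sum.distrib sum_distrib_left algebra_simps)

lemma step_mono:
  assumes "\<And>T. T \<subseteq> star_V N \<Longrightarrow> g T \<le> h T" and "S \<subseteq> star_V N"
  shows "step g S \<le> step h S"
  unfolding step_def
  using p_leaf_to_center_pos p_center_to_leaf_pos leaves_subset_star_V zero_in_star_V
  by (intro sum_mono add_mono mult_left_mono assms(1) copy_to_subset assms(2)) auto

lemma absorb_star_full: "absorb_star n (star_V N) = 1"
proof (induction n)
  case (Suc n)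
  have "step (absorb_star n) (star_V N) = absorb_star n (star_V N)"
    using leaves_subset_star_V zero_in_star_V by (intro step_fixed) (auto simp: copy_to_def)
  then show ?case using Suc by (simp add: absorb_Suc_eq_step)
qed simp

lemma absorb_star_empty: "absorb_star n {} = 0"
proof (induction n)
  case 0
  show ?case using two_le_N by (simp add: star_V_def)
next
  case (Suc n)
  have "step (absorb_star n) {} = absorb_star n {}"
    by (intro step_fixed) (auto simp: copy_to_def)
  then show ?case using Suc by (simp add: absorb_Suc_eq_step)
qed

lemma absorb_star_bounds:
  "S \<subseteq> star_V N \<Longrightarrow> 0 \<le> absorb_star n S \<and> absorb_star n S \<le> 1"
proof (induction n arbitrary: S)
  case (Suc n)
  have "step (\<lambda>_. 0) S \<le> step (absorb_star n) S"
    and "step (absorb_star n) S \<le> step (\<lambda>_. 1) S"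
    using Suc by (auto intro!: step_mono)
  then show ?case by (simp add: absorb_Suc_eq_step step_const)
qed simp

lemma absorb_star_le_Suc: "S \<subseteq> star_V N \<Longrightarrow> absorb_star n S \<le> absorb_star (Suc n) S"
proof (induction n arbitrary: S)
  case 0
  then show ?case
    using absorb_star_full absorb_star_bounds[of S 1] by (cases "S = star_V N") auto
next
  case (Suc n)
  then have "step (absorb_star n) S \<le> step (absorb_star (Suc n)) S" by (intro step_mono)
  then show ?case by (simp only: absorb_Suc_eq_step)
qed

lemma absorb_star_tendsto_fp:
  assumes "S \<subseteq> star_V N"
  shows "(\<lambda>n. absorb_star n S) \<longlonglongrightarrow> fp_star S"
proof -
  have "incseq (\<lambda>n. absorb_star n S)"
    using absorb_star_le_Suc assms by (intro incseq_SucI) auto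
  moreover have "\<forall>n. absorb_star n S \<le> 1" using absorb_star_bounds assms by auto
  ultimately obtain L where "(\<lambda>n. absorb_star n S) \<longlonglongrightarrow> L"
    by (rule incseq_convergent)
  then show ?thesis by (simp add: fp_def limI)
qed

lemma harmonic_fp_star: "harmonic fp_star"
  unfolding harmonic_def
proof (intro allI impI)
  fix S assume S: "S \<subseteq> star_V N"
  have "(\<lambda>n. absorb_star (Suc n) S) \<longlonglongrightarrow> fp_star S"
    using absorb_star_tendsto_fp[OF S] by (rule LIMSEQ_Suc)
  moreover have "(\<lambda>n. absorb_star (Suc n) S) \<longlonglongrightarrow> step fp_star S"
    unfolding absorb_Suc_eq_step step_def
    using S leaves_subset_star_V zero_in_star_V
    by (intro tendsto_intros absorb_star_tendsto_fp copy_to_subset) auto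
  ultimately show "step fp_star S = fp_star S" using LIMSEQ_unique by blast
qed

lemma fp_star_full: "fp_star (star_V N) = 1"
  using absorb_star_tendsto_fp[of "star_V N"] LIMSEQ_unique[OF _ tendsto_const]
  by (simp add: absorb_star_full)

lemma fp_star_empty: "fp_star {} = 0"
  using absorb_star_tendsto_fp[of "{}"] LIMSEQ_unique[OF _ tendsto_const]
  by (simp add: absorb_star_empty)

lemma mutant_weight_copy_to:
  assumes "finite S"
  shows "mutant_weight (copy_to S u v) = mutant_weight S
           + (if u \<in> S \<and> v \<notin> S then vertex_weight v
              else if u \<notin> S \<and> v \<in> S then - vertex_weight v else 0)"
  using assms by (auto simp: copy_to_def mutant_weight_def sum_diff1 insert_absorb)

lemma harmonic_mutant_weight: "harmonic mutant_weight"
  unfolding harmonic_def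
proof (intro allI impI)
  fix S assume "S \<subseteq> star_V N"
  then have "finite S" by (rule finite_subset) (simp add: star_V_def)
  have "p_leaf_to_center * (mutant_weight (copy_to S u 0) - mutant_weight S)
      + p_center_to_leaf * (mutant_weight (copy_to S 0 u) - mutant_weight S) = 0"
    if "u \<in> leaves" for u
    using that zero_notin_leaves detailed_balance
    by (auto simp: mutant_weight_copy_to[OF \<open>finite S\<close>] vertex_weight_def)
  then have "step mutant_weight S - mutant_weight S = 0" by (simp add: step_minus_self)
  then show "step mutant_weight S = mutant_weight S" by simp
qed

lemma mutant_weight_full: "mutant_weight (star_V N) = w_center + (real N - 1) * w_leaf"
proof -
  have "(\<Sum>x\<in>leaves. vertex_weight x) = (\<Sum>x\<in>leaves. w_leaf)"
    using zero_notin_leaves by (intro sum.cong) (auto simp: vertex_weight_def)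
  then show ?thesis
    using zero_notin_leaves finite_leaves
    by (simp add: mutant_weight_def star_V_eq card_leaves vertex_weight_def)
qed

lemma harmonic_max_center_to_leaf:
  assumes "harmonic g" and T: "T \<subseteq> star_V N"
    and max: "\<And>T'. T' \<subseteq> star_V N \<Longrightarrow> g T' \<le> g T" and "v \<in> leaves"
  shows "g (copy_to T 0 v) = g T"
proof -
  let ?a = "\<lambda>u. g (copy_to T u 0)" and ?b = "\<lambda>u. g (copy_to T 0 u)"
  let ?p = "p_leaf_to_center" and ?q = "p_center_to_leaf"
  have a_le: "?a u \<le> g T" and b_le: "?b u \<le> g T" if "u \<in> leaves" for u
    using that leaves_subset_star_V zero_in_star_V
    by (simp_all add: max copy_to_subset[OF T] subsetD)
  have term_le: "?p * ?a u + ?q * ?b u \<le> (?p + ?q) * g T" if "u \<in> leaves" for u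
    using a_le[OF that] b_le[OF that] p_leaf_to_center_pos p_center_to_leaf_pos
    by (simp add: distrib_right add_mono)
  have "real (card leaves) * ((?p + ?q) * g T) = g T"
    by (simp only: mult.assoc[symmetric] card_leaves_mult_p_sum mult_1)
  also have "\<dots> = (\<Sum>u\<in>leaves. ?p * ?a u + ?q * ?b u)"
    using \<open>harmonic g\<close> T by (simp add: harmonic_def step_def)
  finally have "?p * ?a v + ?q * ?b v = (?p + ?q) * g T"
    using finite_leaves term_le \<open>v \<in> leaves\<close>
    by (intro sum_ge_card_bound_imp_eq[where f = "\<lambda>u. ?p * ?a u + ?q * ?b u"]) auto
  moreover have "?p * ?a v \<le> ?p * g T"
    using a_le[OF \<open>v \<in> leaves\<close>] p_leaf_to_center_pos by simp
  ultimately have "?q * g T \<le> ?q * ?b v" by (simp add: distrib_right)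
  then show ?thesis
    using b_le[OF \<open>v \<in> leaves\<close>] p_center_to_leaf_pos by simp
qed

text \<open>The set in the conclusion arises from T by copying the centre onto each leaf of F.\<close>

lemma harmonic_max_spread_center:
  assumes "harmonic g" and T: "T \<subseteq> star_V N"
    and max: "\<And>T'. T' \<subseteq> star_V N \<Longrightarrow> g T' \<le> g T"
    and "finite F" and "F \<subseteq> leaves"
  shows "g (if 0 \<in> T then T \<union> F else T - F) = g T"
  using \<open>finite F\<close> \<open>F \<subseteq> leaves\<close>
proof (induction F rule: finite_induct)
  case (insert x F)
  let ?T' = "if 0 \<in> T then T \<union> F else T - F"
  have T': "?T' \<subseteq> star_V N" using T insert.prems leaves_subset_star_V by auto
  have "(if 0 \<in> T then T \<union> insert x F else T - insert x F) = copy_to ?T' 0 x"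
    using insert.prems zero_notin_leaves by (auto simp: copy_to_def)
  also have "g \<dots> = g ?T'"
    using insert max T' by (intro harmonic_max_center_to_leaf[OF \<open>harmonic g\<close>]) auto
  finally show ?case using insert by simp
qed simp

lemma harmonic_nonpos:
  assumes harm: "harmonic g" and full: "g (star_V N) = 0" and empty: "g {} = 0"
    and "S \<subseteq> star_V N"
  shows "g S \<le> 0"
proof -
  have fin: "finite (g ` Pow (star_V N))" by (simp add: star_V_def)
  have "Max (g ` Pow (star_V N)) \<in> g ` Pow (star_V N)" using fin by (intro Max_in) auto
  then obtain T where T: "T \<subseteq> star_V N" "g T = Max (g ` Pow (star_V N))" by auto
  have max: "g T' \<le> g T" if "T' \<subseteq> star_V N" for T'
    using Max_ge[OF fin] that T(2) by simp
  have "g (if 0 \<in> T then T \<union> leaves else T - leaves) = g T"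
    using harm T(1) max finite_leaves by (rule harmonic_max_spread_center) simp_all
  moreover have "(if 0 \<in> T then T \<union> leaves else T - leaves) \<in> {star_V N, {}}"
    using T(1) star_V_eq by auto
  ultimately have "g T = 0" using full empty by auto
  then show ?thesis using max[OF \<open>S \<subseteq> star_V N\<close>] by simp
qed

lemma fp_star_eq:
  assumes "S \<subseteq> star_V N"
  shows "fp_star S = mutant_weight S / mutant_weight (star_V N)"
proof -
  define Z where "Z = mutant_weight (star_V N)"
  have "0 < Z"
    using two_le_N w_center_ge_1 w_leaf_ge_1
    by (simp add: Z_def mutant_weight_full add_pos_nonneg)
  define D where "D T = fp_star T - mutant_weight T / Z" for T
  have harmonic_D: "harmonic (\<lambda>T. c * D T)" for c
  proof -
    have D_eq: "(\<lambda>T. c * D T) = (\<lambda>T. c * fp_star T + (- c / Z) * mutant_weight T)"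
      by (simp add: fun_eq_iff D_def algebra_simps)
    show ?thesis
      using harmonic_fp_star harmonic_mutant_weight
      unfolding harmonic_def D_eq step_lincomb by simp
  qed
  have "D (star_V N) = 0" "D {} = 0"
    using fp_star_full fp_star_empty \<open>0 < Z\<close> by (simp_all add: D_def Z_def mutant_weight_def)
  then have "1 * D S \<le> 0" "- 1 * D S \<le> 0"
    using assms by (intro harmonic_nonpos[OF harmonic_D]; simp)+
  then show ?thesis by (simp add: D_def Z_def)
qed

end

theorem mainTheorem6:
  fixes N :: nat and d :: real and i :: nat
  assumes "N \<ge> 2" and "0 \<le> d" and "d \<le> 1" and "1 \<le> i" and "i \<le> N - 1"
  shows "fp (star_V N) star_E 1 d {i} =
           (1 + (1 - d) * (real N - 2)) / ((1 - d) * (real N - 2)^2 + 2 * (real N - 1))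
       \<and> fp (star_V N) star_E 1 d {0} =
           (1 + d * (real N - 2)) / ((1 - d) * (real N - 2)^2 + 2 * (real N - 1))"
proof -
  interpret star_process N d using assms by unfold_locales
  have total: "mutant_weight (star_V N) = (1 - d) * (real N - 2)^2 + 2 * (real N - 1)"
    by (simp add: mutant_weight_full w_center_def w_leaf_def algebra_simps power2_eq_square)
  have "{i} \<subseteq> star_V N" "{0} \<subseteq> star_V N" "i \<noteq> 0"
    using assms by (auto simp: star_V_def)
  then show ?thesis
    using fp_star_eq total
    by (simp add: mutant_weight_def vertex_weight_def w_center_def w_leaf_def)
qed

end
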